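(* For every $k\ge 2$, the odd graph $O_k$ has no quantum symmetry, i.e. $C(G_{aut}^+(O_k))$ is commutative.
   Context: The odd graph $O_k$ ($k\ge2$) has as vertices the $(k-1)$-element subsets of $\{1,\dots,2k-1\}$, two vertices being adjacent iff the subsets are disjoint. For a finite simple undirected graph $\Gamma=(V,E)$ with $V=\{1,\dots,n\}$, $C(G_{aut}^+(\Gamma))$ is the universal unital $C^*$-algebra generated by $u_{ij}$, $1\le i,j\le n$, with relations: (R1) $u_{ij}=u_{ij}^*=u_{ij}^2$; (R2) $\sum_{l} u_{il}=1=\sum_{l} u_{li}$ for all $i$; (R3) $u_{ij}u_{kl}=u_{kl}u_{ij}=0$ whenever exactly one of $(i,k)\in E$, $(j,l)\in E$ holds. $\Gamma$ has no quantum symmetry if $C(G_{aut}^+(\Gamma))$ is commutative (equivalently $G_{aut}^+(\Gamma)=\mathrm{Aut}(\Gamma)$). *)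

theory Defs
  imports Complex_Main
begin

locale cstar_algebra =
  fixes smult :: "complex \<Rightarrow> 'a::ring_1 \<Rightarrow> 'a"
    and star :: "'a \<Rightarrow> 'a"
    and nrm :: "'a \<Rightarrow> real"
  assumes smult_add_right: "smult c (x + y) = smult c x + smult c y"
    and smult_add_left: "smult (c + d) x = smult c x + smult d x"
    and smult_smult: "smult c (smult d x) = smult (c * d) x"
    and smult_one: "smult 1 x = x"
    and smult_mult_left: "smult c (x * y) = smult c x * y"
    and smult_mult_right: "smult c (x * y) = x * smult c y"
    and nrm_eq_zero: "nrm x = 0 \<longleftrightarrow> x = 0"
    and nrm_nonneg: "0 \<le> nrm x"
    and nrm_triangle: "nrm (x + y) \<le> nrm x + nrm y"
    and nrm_smult: "nrm (smult c x) = cmod c * nrm x"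
    and nrm_mult: "nrm (x * y) \<le> nrm x * nrm y"
    and complete: "\<And>X. (\<forall>e>0. \<exists>N. \<forall>m\<ge>N. \<forall>n\<ge>N. nrm (X m - X n) < e)
                     \<Longrightarrow> (\<exists>L. (\<lambda>n. nrm (X n - L)) \<longlonglongrightarrow> 0)"
    and star_add: "star (x + y) = star x + star y"
    and star_smult: "star (smult c x) = smult (cnj c) (star x)"
    and star_mult: "star (x * y) = star y * star x"
    and star_star: "star (star x) = x"
    and cstar_identity: "nrm (star x * x) = nrm x ^ 2"

text \<open>A family (u i j) for i, j in V satisfying the defining relations (R1)-(R3) of
C(G_aut^+(Gamma)) for the graph Gamma = (V, E).\<close>

definition graph_magic_unitary ::
  "('a::ring_1 \<Rightarrow> 'a) \<Rightarrow> 'v set \<Rightarrow> ('v \<Rightarrow> 'v \<Rightarrow> bool) \<Rightarrow> ('v \<Rightarrow> 'v \<Rightarrow> 'a) \<Rightarrow> bool" where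
  "graph_magic_unitary star V E u \<longleftrightarrow>
     (\<forall>i\<in>V. \<forall>j\<in>V. u i j = star (u i j) \<and> u i j = u i j * u i j) \<and>
     (\<forall>i\<in>V. (\<Sum>l\<in>V. u i l) = 1 \<and> (\<Sum>l\<in>V. u l i) = 1) \<and>
     (\<forall>i\<in>V. \<forall>j\<in>V. \<forall>k\<in>V. \<forall>l\<in>V. (E i k \<noteq> E j l) \<longrightarrow>
        u i j * u k l = 0 \<and> u k l * u i j = 0)"

definition odd_graph_vertices :: "nat \<Rightarrow> nat set set" where
  "odd_graph_vertices k = {A. A \<subseteq> {1..2*k-1} \<and> card A = k - 1}"

definition odd_graph_adj :: "nat set \<Rightarrow> nat set \<Rightarrow> bool" where
  "odd_graph_adj A B \<longleftrightarrow> A \<inter> B = {}"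

end

theory Submission
  imports Defs
begin

text \<open>
  For a vertex X and a point y, point_proj X y is the
  projection ``X is sent to a vertex containing y''. An edge X Y of O_k misses exactly one point,
  its label, and (1 - point_proj X y) (1 - point_proj Y y) is the projection ``the edge X Y is
  sent to an edge labelled y''. Entries in adjacent rows of u commute, because two orthogonal
  families of projections whose products sum to the same projection commute termwise; hence
  these edge projections are projections, and exchanging one point at a time shows that they
  depend only on the label z of the edge. This gives a (2k-1) x (2k-1) matrix label_proj z y of
  projections with point_proj X y the sum of label_proj x y over x in X, whose entries commute by
  a count over (k-1)-subsets of the points. Finally u X B is the product of the commuting
  projections point_proj X y over y in B.
\<close>

lemma sum_eq_single:
  fixes f :: "'b \<Rightarrow> 'a::comm_monoid_add"
  assumes "finite S" "b \<in> S" "\<And>b'. b' \<in> S \<Longrightarrow> b' \<noteq> b \<Longrightarrow> f b' = 0"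
  shows "sum f S = f b"
  using sum.mono_neutral_right[of S "{b}" f] assms by auto

lemma of_nat_mult_eq_zero_if_subset_sums_eq_zero:
  fixes f :: "'b \<Rightarrow> 'a::ring_1"
  assumes T: "finite T" "c \<in> T" "j < card T"
    and sums: "\<And>S. S \<subseteq> T \<Longrightarrow> card S = j \<Longrightarrow> sum f S = 0"
  shows "of_nat j * f c = 0"
proof (cases j)
  case (Suc i)
  have const: "f c' = f c" if c': "c' \<in> T" for c'
  proof -
    have "i \<le> card (T - {c, c'})"
      using T c' Suc by (auto simp: card_Diff_subset card_insert_if)
    then obtain S where S: "S \<subseteq> T - {c, c'}" "card S = i"
      by (rule obtain_subset_with_card_n)
    have S': "finite S" "c \<notin> S" "c' \<notin> S" "insert c S \<subseteq> T" "insert c' S \<subseteq> T"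
      using S(1) T(1,2) c' finite_subset by auto
    have "f c + sum f S = 0" "f c' + sum f S = 0"
      using sums[of "insert c S"] sums[of "insert c' S"] S' S(2) Suc by auto
    thus ?thesis by (metis add_right_cancel)
  qed
  have "i \<le> card (T - {c})" using T Suc by simp
  then obtain S where S: "S \<subseteq> T - {c}" "card S = i"
    by (rule obtain_subset_with_card_n)
  have "finite S" using S(1) T(1) finite_subset by blast
  have "sum f S = (\<Sum>_\<in>S. f c)" using const S(1) by (intro sum.cong) auto
  hence "sum f (insert c S) = f c + of_nat i * f c"
    using S \<open>finite S\<close> by (subst sum.insert) auto
  moreover have "insert c S \<subseteq> T" "card (insert c S) = j"
    using S T(2) \<open>finite S\<close> Suc by (auto simp: card_insert_if)
  ultimately show ?thesis using sums Suc by (simp add: distrib_right)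
qed simp

lemma mult_sum_orthogonal:
  fixes e t :: "'b \<Rightarrow> 'a::semiring_0"
  assumes "finite S" "b \<in> S" "e b * e b = e b" "\<And>b'. b' \<in> S \<Longrightarrow> b' \<noteq> b \<Longrightarrow> e b * e b' = 0"
  shows "e b * (\<Sum>b'\<in>S. e b' * t b') = e b * t b"
proof -
  have "e b * (\<Sum>b'\<in>S. e b' * t b') = (\<Sum>b'\<in>S. e b * e b' * t b')"
    by (simp add: sum_distrib_left mult.assoc)
  also have "\<dots> = e b * e b * t b" using assms by (intro sum_eq_single) auto
  finally show ?thesis using assms(3) by simp
qed

section \<open>Projections in a C*-algebra\<close>

context cstar_algebra
begin

lemma star_zero [simp]: "star 0 = 0"
  using star_add[of 0 0] by simp

lemma star_one [simp]: "star 1 = 1"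
  using star_mult[of "star 1" 1] by (simp add: star_star)

lemma star_uminus [simp]: "star (- x) = - star x"
  using star_add[of x "- x"] minus_unique[of "star x" "star (- x)"] by simp

lemma star_diff [simp]: "star (x - y) = star x - star y"
  using star_add[of x "- y"] by simp

lemma star_sum: "star (sum f A) = (\<Sum>i\<in>A. star (f i))"
  by (induction A rule: infinite_finite_induct) (auto simp: star_add)

lemma star_mult_self_eq_zero:
  assumes "star x * x = 0" shows "x = 0"
proof -
  have "nrm x ^ 2 = 0" using assms cstar_identity[of x] nrm_eq_zero[of 0] by simp
  thus ?thesis using nrm_eq_zero by simp
qed

lemma smult_of_nat: "smult (of_nat n) x = of_nat n * x"
proof (induction n)
  case 0
  show ?case using smult_add_left[of 0 0 x] by simp
next
  case (Suc n)
  thus ?case using smult_add_left[of 1 "of_nat n" x] by (simp add: smult_one algebra_simps)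
qed

lemma of_nat_mult_eq_zero:
  fixes x :: 'a
  assumes "of_nat n * x = 0" "0 < n"
  shows "x = 0"
proof -
  have "x = smult (1 / of_nat n) (smult (of_nat n) x)"
    using assms(2) by (simp add: smult_smult smult_one)
  also have "\<dots> = smult (1 / of_nat n) 0" using assms(1) by (simp add: smult_of_nat)
  also have "\<dots> = 0" using smult_add_right[of _ 0 0] by simp
  finally show ?thesis .
qed

definition is_proj :: "'a \<Rightarrow> bool" where
  "is_proj p \<longleftrightarrow> star p = p \<and> p * p = p"

lemma selfadjoint_commute_if_absorb:
  assumes "star p = p" "star q = q" "p * q * p = p * q"
  shows "p * q = q * p"
proof -
  have "star (p * q * p) = p * q * p" using assms(1,2) by (simp add: star_mult mult.assoc)
  hence "star (p * q) = p * q" using assms(3) by simp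
  thus ?thesis using assms(1,2) by (simp add: star_mult)
qed

lemma selfadjoint_idem_if_cube_eq_square:
  assumes "star y = y" "y * (y * y) = y * y"
  shows "y * y = y"
proof -
  define d where "d = y - y * y"
  have "star d = d" using assms(1) by (simp add: d_def star_mult)
  moreover have "d * d = 0"
    using assms(2) by (simp add: d_def algebra_simps)
  ultimately have "star d * d = 0" by simp
  hence "d = 0" by (rule star_mult_self_eq_zero)
  thus ?thesis by (simp add: d_def)
qed

lemma proj_commute_if_compression_idem:
  assumes r: "is_proj r" and s: "is_proj s" and idem: "s * r * s * (s * r * s) = s * r * s"
  shows "r * s = s * r"
proof -
  define x where "x = r * s - s * r * s"
  have rs: "star r = r" "r * r = r" "star s = s" "s * s = s" using r s by (auto simp: is_proj_def)
  have absorb: "r * (r * z) = r * z" "s * (s * z) = s * z" for z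
    using rs by (simp_all add: mult.assoc[symmetric])
  have "star x * x = s * r * s - s * r * s * (s * r * s)"
    by (simp add: x_def star_mult rs absorb mult.assoc left_diff_distrib right_diff_distrib)
  hence "star x * x = 0" by (simp only: idem diff_self)
  hence "x = 0" by (rule star_mult_self_eq_zero)
  hence rs_eq: "r * s = s * r * s" by (simp add: x_def)
  have "s * r = star (r * s)" by (simp add: star_mult rs)
  also have "\<dots> = s * r * s" unfolding rs_eq by (simp add: star_mult rs mult.assoc)
  finally show ?thesis using rs_eq by (metis trans sym)
qed

lemma proj_families_commute:
  fixes r s :: "'b \<Rightarrow> 'a"
  assumes S: "finite S" "b \<in> S"
    and proj: "\<And>b. b \<in> S \<Longrightarrow> is_proj (r b)" "\<And>b. b \<in> S \<Longrightarrow> is_proj (s b)"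
    and r_orth: "\<And>b b'. b \<in> S \<Longrightarrow> b' \<in> S \<Longrightarrow> b \<noteq> b' \<Longrightarrow> r b * r b' = 0"
    and s_orth: "\<And>b b'. b \<in> S \<Longrightarrow> b' \<in> S \<Longrightarrow> b \<noteq> b' \<Longrightarrow> s b * s b' = 0"
    and w: "(\<Sum>b\<in>S. r b * s b) = w" "(\<Sum>b\<in>S. s b * r b) = w" "w * w = w"
  shows "r b * s b = s b * r b"
proof -
  have idem: "r b' * r b' = r b'" "s b' * s b' = s b'" if "b' \<in> S" for b'
    using proj that by (auto simp: is_proj_def)
  have r_sum: "r b' * (\<Sum>b''\<in>S. r b'' * t b'') = r b' * t b'" if "b' \<in> S" for b' t
    using S(1) that idem r_orth by (intro mult_sum_orthogonal) auto
  have s_sum: "s b * (\<Sum>b'\<in>S. s b' * t b') = s b * t b" for t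
    using S idem s_orth by (intro mult_sum_orthogonal) auto
  have w_eq: "w = (\<Sum>b'\<in>S. s b' * (r b' * s b'))"
  proof -
    have "w = (\<Sum>b'\<in>S. s b' * r b') * (\<Sum>b''\<in>S. r b'' * s b'')"
      using w by simp
    also have "\<dots> = (\<Sum>b'\<in>S. s b' * (r b' * (\<Sum>b''\<in>S. r b'' * s b'')))"
      by (simp add: sum_distrib_right mult.assoc)
    finally show ?thesis using r_sum by simp
  qed
  define y where "y = s b * r b * s b"
  have "y * r b = s b * r b * (s b * (\<Sum>b'\<in>S. s b' * r b'))"
    by (simp add: y_def s_sum mult.assoc)
  also have "\<dots> = s b * r b * (s b * (\<Sum>b'\<in>S. s b' * (r b' * s b')))"
    using w w_eq by simp
  also have "\<dots> = y * y"
    using idem(2)[OF S(2)] by (simp add: y_def s_sum mult.assoc flip: mult.assoc[of "s b" "s b"])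
  finally have y_r: "y * r b = y * y" .
  have "y * (y * y) = y * y"
    by (metis y_r idem(1)[OF S(2)] mult.assoc)
  moreover have "star y = y"
    using proj S by (simp add: y_def is_proj_def star_mult mult.assoc)
  ultimately have "y * y = y" by (rule selfadjoint_idem_if_cube_eq_square[rotated])
  thus ?thesis using proj S by (intro proj_commute_if_compression_idem) (simp_all add: y_def)
qed

end

section \<open>Magic unitaries of graphs\<close>

lemma graph_magic_unitary_row_orthogonal:
  fixes star :: "'a::ring_1 \<Rightarrow> 'a"
  assumes u: "graph_magic_unitary star V E u" and "symp E"
    and V: "i \<in> V" "j \<in> V" "j' \<in> V" "D \<in> V" and "E j D" "\<not> E j' D"
  shows "u i j * u i j' = 0"
proof -
  have "(\<Sum>t\<in>V. u t D) = 1" using u V by (simp add: graph_magic_unitary_def)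
  hence "u i j * u i j' = u i j * (\<Sum>t\<in>V. u t D) * u i j'" by simp
  also have "\<dots> = (\<Sum>t\<in>V. u i j * u t D * u i j')"
    by (simp add: sum_distrib_left sum_distrib_right)
  also have "\<dots> = 0"
  proof (intro sum.neutral ballI)
    fix t assume "t \<in> V"
    then consider "u i j * u t D = 0" | "u t D * u i j' = 0"
      using u V \<open>symp E\<close> \<open>E j D\<close> \<open>\<not> E j' D\<close>
      unfolding graph_magic_unitary_def by (metis sympD)
    thus "u i j * u t D * u i j' = 0" by cases (simp_all add: mult.assoc)
  qed
  finally show ?thesis .
qed

lemma graph_magic_unitary_col_orthogonal:
  fixes star :: "'a::ring_1 \<Rightarrow> 'a"
  assumes u: "graph_magic_unitary star V E u" and "symp E"
    and V: "i \<in> V" "i' \<in> V" "j \<in> V" "F \<in> V" and "E i F" "\<not> E i' F"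
  shows "u i j * u i' j = 0"
proof -
  have "(\<Sum>t\<in>V. u F t) = 1" using u V by (simp add: graph_magic_unitary_def)
  hence "u i j * u i' j = u i j * (\<Sum>t\<in>V. u F t) * u i' j" by simp
  also have "\<dots> = (\<Sum>t\<in>V. u i j * u F t * u i' j)"
    by (simp add: sum_distrib_left sum_distrib_right)
  also have "\<dots> = 0"
  proof (intro sum.neutral ballI)
    fix t assume "t \<in> V"
    then consider "u i j * u F t = 0" | "u F t * u i' j = 0"
      using u V \<open>symp E\<close> \<open>E i F\<close> \<open>\<not> E i' F\<close>
      unfolding graph_magic_unitary_def by (metis sympD)
    thus "u i j * u F t * u i' j = 0" by cases (simp_all add: mult.assoc)
  qed
  finally show ?thesis .
qed

lemma symp_odd_graph_adj: "symp odd_graph_adj"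
  by (auto simp: symp_def odd_graph_adj_def)

section \<open>The odd graph\<close>

locale odd_graph =
  fixes k :: nat
  assumes two_le_k: "2 \<le> k"
begin

definition points :: "nat set" where "points = {1..2*k-1}"

abbreviation verts :: "nat set set" where "verts \<equiv> odd_graph_vertices k"

text \<open>The neighbours of B are the sets nbr y B with y not in B; y is the label of that edge.\<close>

definition nbr :: "nat \<Rightarrow> nat set \<Rightarrow> nat set" where "nbr y B = points - B - {y}"

definition nbrs :: "nat set \<Rightarrow> nat set set" where "nbrs B = {D \<in> verts. B \<inter> D = {}}"

definition avoiding :: "nat \<Rightarrow> nat set set" where "avoiding y = {B \<in> verts. y \<notin> B}"

lemma finite_points [simp]: "finite points"
  by (simp add: points_def)

lemma card_points: "card points = 2*k-1"
  by (simp add: points_def)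

lemma in_verts_iff: "A \<in> verts \<longleftrightarrow> A \<subseteq> points \<and> card A = k - 1"
  by (simp add: odd_graph_vertices_def points_def)

lemma vert_subset_points: "A \<in> verts \<Longrightarrow> A \<subseteq> points"
  by (simp add: in_verts_iff)

lemma card_vert: "A \<in> verts \<Longrightarrow> card A = k - 1"
  by (simp add: in_verts_iff)

lemma finite_vert: "A \<in> verts \<Longrightarrow> finite A"
  by (rule finite_subset[OF vert_subset_points finite_points])

lemma finite_verts [simp]: "finite verts"
  by (rule finite_subset[of _ "Pow points"]) (auto dest: vert_subset_points)

lemma finite_nbrs [simp]: "finite (nbrs B)"
  by (simp add: nbrs_def)

lemma finite_avoiding [simp]: "finite (avoiding y)"
  by (simp add: avoiding_def)

lemma vert_eq_if_subset: "A \<in> verts \<Longrightarrow> B \<in> verts \<Longrightarrow> A \<subseteq> B \<Longrightarrow> A = B"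
  using card_subset_eq finite_vert card_vert by metis

lemma card_points_diff_vert: "A \<in> verts \<Longrightarrow> card (points - A) = k"
  using two_le_k by (simp add: card_Diff_subset finite_vert vert_subset_points card_vert card_points)

lemma nbr_in_verts: assumes "B \<in> verts" "y \<in> points" "y \<notin> B" shows "nbr y B \<in> verts"
  using assms card_points_diff_vert[OF assms(1)] by (auto simp: in_verts_iff nbr_def)

lemma nbr_in_avoiding: "B \<in> avoiding y \<Longrightarrow> y \<in> points \<Longrightarrow> nbr y B \<in> avoiding y"
  using nbr_in_verts by (auto simp: avoiding_def nbr_def)

lemma disjoint_nbr [simp]: "B \<inter> nbr y B = {}" "nbr y B \<inter> B = {}" "y \<notin> nbr y B"
  by (auto simp: nbr_def)

lemma nbr_nbr: "B \<in> verts \<Longrightarrow> y \<notin> B \<Longrightarrow> nbr y (nbr y B) = B"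
  using vert_subset_points by (auto simp: nbr_def)

lemma inj_on_nbr_label: "inj_on (\<lambda>y. nbr y B) (points - B)"
  by (auto simp: inj_on_def nbr_def)

lemma inj_on_nbr: "inj_on (nbr y) (avoiding y)"
proof (rule inj_onI)
  fix B B' assume B: "B \<in> avoiding y" "B' \<in> avoiding y" and eq: "nbr y B = nbr y B'"
  have "B = nbr y (nbr y B)" using B(1) by (simp add: avoiding_def nbr_nbr)
  also have "\<dots> = B'" unfolding eq using B(2) by (simp add: avoiding_def nbr_nbr)
  finally show "B = B'" .
qed

lemma nbr_unique:
  assumes "B \<in> verts" "D \<in> verts" "B \<inter> D = {}" "y \<in> points" "y \<notin> B" "y \<notin> D"
  shows "D = nbr y B"
proof (rule vert_eq_if_subset[OF assms(2) nbr_in_verts[OF assms(1,4,5)]])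
  show "D \<subseteq> nbr y B" using assms vert_subset_points[OF assms(2)] by (auto simp: nbr_def)
qed

lemma disjoint_verts_miss_point:
  assumes "B \<in> verts" "D \<in> verts" "B \<inter> D = {}"
  obtains y where "y \<in> points" "y \<notin> B" "y \<notin> D"
proof -
  have "card (B \<union> D) < card points"
    using assms two_le_k by (simp add: card_Un_disjoint finite_vert card_vert card_points)
  hence "\<not> points \<subseteq> B \<union> D"
    using assms by (meson card_mono finite_Un finite_vert leD)
  thus ?thesis using that by blast
qed

lemma disjoint_vert_eq_nbr:
  assumes "B \<in> verts" "D \<in> verts" "B \<inter> D = {}"
  obtains y where "y \<in> points" "y \<notin> B" "D = nbr y B"
proof -
  obtain y where "y \<in> points" "y \<notin> B" "y \<notin> D" using disjoint_verts_miss_point[OF assms] .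
  thus ?thesis using that nbr_unique[OF assms] by blast
qed

lemma nbrs_eq_image:
  assumes "B \<in> verts" shows "nbrs B = (\<lambda>y. nbr y B) ` (points - B)"
proof
  show "nbrs B \<subseteq> (\<lambda>y. nbr y B) ` (points - B)"
    by (auto simp: nbrs_def intro: disjoint_vert_eq_nbr[OF assms])
  show "(\<lambda>y. nbr y B) ` (points - B) \<subseteq> nbrs B"
    using nbr_in_verts[OF assms] by (auto simp: nbrs_def nbr_def)
qed

lemma card_nbrs: "B \<in> verts \<Longrightarrow> card (nbrs B) = k"
  by (simp add: nbrs_eq_image card_image inj_on_nbr_label card_points_diff_vert)

lemma sum_nbrs: "C \<in> verts \<Longrightarrow> (\<Sum>Y\<in>nbrs C. f Y) = (\<Sum>x\<in>points - C. f (nbr x C))"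
  by (simp add: nbrs_eq_image sum.reindex[OF inj_on_nbr_label])

lemma card_nbrs_containing:
  assumes "B \<in> verts" "y \<in> points" "y \<notin> B"
  shows "card {D \<in> nbrs B. y \<in> D} = k - 1"
proof -
  have "{D \<in> nbrs B. y \<in> D} = (\<lambda>w. nbr w B) ` (points - B - {y})"
    using assms by (auto simp: nbrs_eq_image nbr_def)
  moreover have "inj_on (\<lambda>w. nbr w B) (points - B - {y})"
    using inj_on_nbr_label by (rule inj_on_subset) auto
  ultimately show ?thesis
    using assms by (simp add: card_image card_points_diff_vert[OF assms(1)] card_Diff_singleton)
qed

lemma exists_nbr_separating:
  assumes "B \<in> verts" "B' \<in> verts" "B \<noteq> B'"
  obtains D where "D \<in> verts" "B \<inter> D = {}" "B' \<inter> D \<noteq> {}"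
proof -
  obtain b where b: "b \<in> B'" "b \<notin> B" using assms vert_eq_if_subset by blast
  have "card (points - B - {b}) \<noteq> 0"
    using card_points_diff_vert[OF assms(1)] two_le_k by (simp add: card_Diff_singleton_if)
  hence "points - B - {b} \<noteq> {}" by (rule contrapos_nn) simp
  then obtain w where w: "w \<in> points" "w \<notin> B" "w \<noteq> b" by blast
  have "b \<in> nbr w B" using b w vert_subset_points[OF assms(2)] by (auto simp: nbr_def)
  thus ?thesis using that[OF nbr_in_verts[OF assms(1) w(1,2)]] b(1) by auto
qed

lemma disjoint_avoiding_eq_nbr:
  assumes "B \<in> avoiding y" "D \<in> avoiding y" "B \<inter> D = {}" "y \<in> points"
  shows "D = nbr y B"
  using assms by (intro nbr_unique) (simp_all add: avoiding_def)

lemma exchange_in_verts: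
  assumes "X \<in> verts" "a \<in> X" "c \<in> points" "c \<notin> X"
  shows "insert c (X - {a}) \<in> verts"
proof -
  have "0 < card X" using assms(2) finite_vert[OF assms(1)] card_gt_0_iff by blast
  hence "card (insert c (X - {a})) = card X"
    using assms finite_vert[OF assms(1)] by simp
  thus ?thesis using assms vert_subset_points[OF assms(1)] by (auto simp: in_verts_iff)
qed

lemma nbr_exchange:
  assumes "X \<in> verts" "z \<notin> X" "a \<in> X" "c \<in> points" "c \<notin> X" "c \<noteq> z"
  shows "insert a (nbr z X - {c}) = nbr z (insert c (X - {a}))"
  using assms vert_subset_points[OF assms(1)] by (auto simp: nbr_def)

lemma exists_vert_disjoint:
  assumes "F \<subseteq> points" "card F \<le> k"
  obtains A where "A \<in> verts" "A \<inter> F = {}"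
proof -
  have "finite F" using assms(1) by (rule finite_subset) simp
  hence "k - 1 \<le> card (points - F)"
    using assms card_points by (simp add: card_Diff_subset)
  then obtain A where "A \<subseteq> points - F" "card A = k - 1" by (rule obtain_subset_with_card_n)
  thus ?thesis using that by (auto simp: in_verts_iff)
qed

end

locale odd_graph_magic_unitary = cstar_algebra + odd_graph +
  fixes u :: "nat set \<Rightarrow> nat set \<Rightarrow> 'a"
  assumes magic: "graph_magic_unitary star (odd_graph_vertices k) odd_graph_adj u"
begin

lemma u_selfadjoint: "i \<in> verts \<Longrightarrow> j \<in> verts \<Longrightarrow> star (u i j) = u i j"
  using magic by (simp add: graph_magic_unitary_def)

lemma u_idem: "i \<in> verts \<Longrightarrow> j \<in> verts \<Longrightarrow> u i j * u i j = u i j"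
  using magic by (simp add: graph_magic_unitary_def)

lemma u_is_proj: "i \<in> verts \<Longrightarrow> j \<in> verts \<Longrightarrow> is_proj (u i j)"
  by (simp add: is_proj_def u_selfadjoint u_idem)

lemma row_sum: "i \<in> verts \<Longrightarrow> (\<Sum>l\<in>verts. u i l) = 1"
  using magic by (simp add: graph_magic_unitary_def)

lemma col_sum: "j \<in> verts \<Longrightarrow> (\<Sum>l\<in>verts. u l j) = 1"
  using magic by (simp add: graph_magic_unitary_def)

lemma u_mult_eq_zero:
  "i \<in> verts \<Longrightarrow> j \<in> verts \<Longrightarrow> p \<in> verts \<Longrightarrow> q \<in> verts \<Longrightarrow>
   (i \<inter> p = {}) \<noteq> (j \<inter> q = {}) \<Longrightarrow> u i j * u p q = 0"
  using magic by (simp add: graph_magic_unitary_def odd_graph_adj_def)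

lemma u_row_orth:
  assumes "i \<in> verts" "j \<in> verts" "j' \<in> verts" "j \<noteq> j'"
  shows "u i j * u i j' = 0"
proof -
  obtain D where "D \<in> verts" "j \<inter> D = {}" "j' \<inter> D \<noteq> {}"
    using exists_nbr_separating[OF assms(2-4)] .
  thus ?thesis
    using graph_magic_unitary_row_orthogonal[OF magic symp_odd_graph_adj] assms
    by (simp add: odd_graph_adj_def)
qed

lemma u_col_orth:
  assumes "i \<in> verts" "i' \<in> verts" "j \<in> verts" "i \<noteq> i'"
  shows "u i j * u i' j = 0"
proof -
  obtain F where "F \<in> verts" "i \<inter> F = {}" "i' \<inter> F \<noteq> {}"
    using exists_nbr_separating[OF assms(1,2,4)] .
  thus ?thesis
    using graph_magic_unitary_col_orthogonal[OF magic symp_odd_graph_adj] assms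
    by (simp add: odd_graph_adj_def)
qed

lemma row_subsum_mult:
  assumes "X \<in> verts" "S \<subseteq> verts" "S' \<subseteq> verts"
  shows "(\<Sum>B\<in>S. u X B) * (\<Sum>B\<in>S'. u X B) = (\<Sum>B\<in>S \<inter> S'. u X B)"
proof -
  have fin: "finite S" "finite S'" using assms(2,3) by (auto intro: finite_subset)
  have "(\<Sum>B\<in>S. u X B) * (\<Sum>B\<in>S'. u X B) = (\<Sum>B\<in>S. \<Sum>B'\<in>S'. u X B * u X B')"
    by (rule sum_product)
  also have "\<dots> = (\<Sum>B\<in>S. \<Sum>B'\<in>S'. if B = B' then u X B else 0)"
  proof (intro sum.cong refl)
    fix B B' assume "B \<in> S" "B' \<in> S'"
    hence "B \<in> verts" "B' \<in> verts" using assms by auto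
    thus "u X B * u X B' = (if B = B' then u X B else 0)"
      using assms u_idem u_row_orth by simp
  qed
  also have "\<dots> = (\<Sum>B\<in>S \<inter> S'. u X B)"
    using fin by (simp add: sum.inter_restrict)
  finally show ?thesis .
qed

section \<open>Point and edge projections\<close>

definition point_proj :: "nat set \<Rightarrow> nat \<Rightarrow> 'a" where
  "point_proj X y = (\<Sum>B\<in>{B \<in> verts. y \<in> B}. u X B)"

definition edge_proj :: "nat set \<Rightarrow> nat set \<Rightarrow> nat \<Rightarrow> 'a" where
  "edge_proj X Y y = (1 - point_proj X y) * (1 - point_proj Y y)"

lemma one_minus_point_proj:
  assumes "X \<in> verts" shows "1 - point_proj X y = (\<Sum>B\<in>avoiding y. u X B)"
proof -
  have "verts = {B \<in> verts. y \<in> B} \<union> avoiding y" "{B \<in> verts. y \<in> B} \<inter> avoiding y = {}"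
    by (auto simp: avoiding_def)
  hence "(\<Sum>B\<in>verts. u X B) = point_proj X y + (\<Sum>B\<in>avoiding y. u X B)"
    unfolding point_proj_def by (metis finite_verts finite_Un sum.union_disjoint)
  thus ?thesis using row_sum[OF assms] by (simp add: algebra_simps)
qed

lemma point_proj_selfadjoint: "X \<in> verts \<Longrightarrow> star (point_proj X y) = point_proj X y"
  by (simp add: point_proj_def star_sum u_selfadjoint)

lemma point_proj_idem: "X \<in> verts \<Longrightarrow> point_proj X y * point_proj X y = point_proj X y"
  unfolding point_proj_def by (subst row_subsum_mult) auto

lemma point_proj_commute: "X \<in> verts \<Longrightarrow> point_proj X y * point_proj X y' = point_proj X y' * point_proj X y"
  unfolding point_proj_def by (simp add: row_subsum_mult Int_commute)

lemma point_proj_orth: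
  assumes "X \<in> verts" "Y \<in> verts" "X \<inter> Y = {}"
  shows "point_proj X y * point_proj Y y = 0"
  unfolding point_proj_def sum_product
  using assms by (intro sum.neutral ballI) (auto intro: u_mult_eq_zero)

lemma edge_proj_eq:
  assumes "X \<in> verts" "Y \<in> verts" "X \<inter> Y = {}"
  shows "edge_proj X Y y = 1 - point_proj X y - point_proj Y y"
  unfolding edge_proj_def using point_proj_orth[OF assms] by (simp add: algebra_simps)

lemma edge_proj_sym:
  assumes "X \<in> verts" "Y \<in> verts" "X \<inter> Y = {}"
  shows "edge_proj X Y y = edge_proj Y X y"
proof -
  have "edge_proj Y X y = 1 - point_proj Y y - point_proj X y"
    using edge_proj_eq[of Y X] assms by (simp add: Int_commute)
  thus ?thesis using edge_proj_eq[OF assms] by (simp add: diff_diff_eq add.commute)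
qed

lemma edge_proj_selfadjoint:
  assumes "X \<in> verts" "Y \<in> verts" "X \<inter> Y = {}"
  shows "star (edge_proj X Y y) = edge_proj X Y y"
  using assms by (simp add: edge_proj_eq point_proj_selfadjoint)

lemma edge_proj_idem:
  assumes "X \<in> verts" "Y \<in> verts" "X \<inter> Y = {}"
  shows "edge_proj X Y y * edge_proj X Y y = edge_proj X Y y"
  using assms point_proj_orth[OF assms] point_proj_orth[of Y X] point_proj_idem
  by (simp add: edge_proj_eq algebra_simps Int_commute)

lemma edge_proj_mult_point_proj:
  assumes "X \<in> verts" "Y \<in> verts" "X \<inter> Y = {}"
  shows "edge_proj X Y y * point_proj X y = 0"
  using assms point_proj_orth[of Y X] point_proj_idem
  by (simp add: edge_proj_eq algebra_simps Int_commute)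

lemma u_mult_eq_zero_if_not_nbr:
  assumes "X \<in> verts" "Y \<in> verts" "X \<inter> Y = {}" "y \<in> points"
    and "B \<in> avoiding y" "D \<in> avoiding y" "D \<noteq> nbr y B"
  shows "u X B * u Y D = 0" "u Y D * u X B = 0"
proof -
  have "B \<inter> D \<noteq> {}" using assms disjoint_avoiding_eq_nbr by blast
  thus "u X B * u Y D = 0" "u Y D * u X B = 0"
    using assms u_mult_eq_zero[of X B Y D] u_mult_eq_zero[of Y D X B]
    by (auto simp: avoiding_def Int_commute)
qed

lemma edge_proj_eq_sum:
  assumes "X \<in> verts" "Y \<in> verts" "X \<inter> Y = {}" "y \<in> points"
  shows "edge_proj X Y y = (\<Sum>B\<in>avoiding y. u X B * u Y (nbr y B))"
proof -
  have "edge_proj X Y y = (\<Sum>B\<in>avoiding y. \<Sum>D\<in>avoiding y. u X B * u Y D)"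
    using assms by (simp add: edge_proj_def one_minus_point_proj sum_product)
  also have "\<dots> = (\<Sum>B\<in>avoiding y. u X B * u Y (nbr y B))"
    using assms nbr_in_avoiding u_mult_eq_zero_if_not_nbr by (intro sum.cong refl sum_eq_single) auto
  finally show ?thesis .
qed

lemma edge_proj_eq_sum':
  assumes "X \<in> verts" "Y \<in> verts" "X \<inter> Y = {}" "y \<in> points"
  shows "edge_proj X Y y = (\<Sum>B\<in>avoiding y. u Y (nbr y B) * u X B)"
proof -
  have "edge_proj X Y y = edge_proj Y X y" using assms(1-3) by (rule edge_proj_sym)
  also have "\<dots> = (\<Sum>D\<in>avoiding y. \<Sum>B\<in>avoiding y. u Y D * u X B)"
    using assms by (simp add: edge_proj_def one_minus_point_proj sum_product)
  also have "\<dots> = (\<Sum>B\<in>avoiding y. \<Sum>D\<in>avoiding y. u Y D * u X B)"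
    by (rule sum.swap)
  also have "\<dots> = (\<Sum>B\<in>avoiding y. u Y (nbr y B) * u X B)"
    using assms nbr_in_avoiding u_mult_eq_zero_if_not_nbr by (intro sum.cong refl sum_eq_single) auto
  finally show ?thesis .
qed

lemma adjacent_entries_commute:
  assumes X: "X \<in> verts" "Y \<in> verts" "X \<inter> Y = {}" and "B \<in> verts" "D \<in> verts"
  shows "u X B * u Y D = u Y D * u X B"
proof (cases "B \<inter> D = {}")
  case False
  thus ?thesis using assms u_mult_eq_zero[of X B Y D] u_mult_eq_zero[of Y D X B]
    by (simp add: Int_commute)
next
  case True
  then obtain y where y: "y \<in> points" "y \<notin> B" "D = nbr y B"
    using disjoint_vert_eq_nbr assms(4,5) by metis
  have "u X B * u Y (nbr y B) = u Y (nbr y B) * u X B"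
  proof (rule proj_families_commute[where S = "avoiding y" and w = "edge_proj X Y y"])
    show "b \<in> avoiding y \<Longrightarrow> is_proj (u Y (nbr y b))" for b
      using nbr_in_avoiding[OF _ y(1)] X by (auto intro: u_is_proj simp: avoiding_def)
    show "b \<in> avoiding y \<Longrightarrow> b' \<in> avoiding y \<Longrightarrow> b \<noteq> b' \<Longrightarrow>
        u Y (nbr y b) * u Y (nbr y b') = 0" for b b'
      using nbr_in_avoiding[OF _ y(1)] inj_on_nbr X
      by (intro u_row_orth) (auto simp: avoiding_def dest: inj_onD)
    show "(\<Sum>b\<in>avoiding y. u X b * u Y (nbr y b)) = edge_proj X Y y"
      using edge_proj_eq_sum[OF X y(1)] by simp
    show "(\<Sum>b\<in>avoiding y. u Y (nbr y b) * u X b) = edge_proj X Y y"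
      using edge_proj_eq_sum'[OF X y(1)] by simp
    show "edge_proj X Y y * edge_proj X Y y = edge_proj X Y y"
      using X by (rule edge_proj_idem)
  qed (use assms y u_is_proj u_row_orth in \<open>auto simp: avoiding_def\<close>)
  thus ?thesis using y by simp
qed

lemma edge_proj_mult_eq_zero:
  assumes X: "X \<in> verts" "Y \<in> verts" "Y' \<in> verts" "X \<inter> Y = {}" "X \<inter> Y' = {}"
    and y: "y \<in> points" "y' \<in> points"
    and zero: "\<And>B. B \<in> avoiding y \<Longrightarrow> B \<in> avoiding y' \<Longrightarrow> u Y (nbr y B) * u Y' (nbr y' B) = 0"
  shows "edge_proj X Y y * edge_proj X Y' y' = 0"
proof -
  have "edge_proj X Y y * edge_proj X Y' y' =
      (\<Sum>B\<in>avoiding y. u Y (nbr y B) * u X B) * (\<Sum>B'\<in>avoiding y'. u X B' * u Y' (nbr y' B'))"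
    using assms edge_proj_eq_sum'[of X Y y] edge_proj_eq_sum[of X Y' y'] by simp
  also have "\<dots> =
      (\<Sum>B\<in>avoiding y. \<Sum>B'\<in>avoiding y'. u Y (nbr y B) * (u X B * u X B') * u Y' (nbr y' B'))"
    by (simp add: sum_product mult.assoc)
  also have "\<dots> = 0"
  proof (intro sum.neutral ballI)
    fix B B' assume B: "B \<in> avoiding y" "B' \<in> avoiding y'"
    have V: "B \<in> verts" "B' \<in> verts" "nbr y B \<in> verts"
      using B nbr_in_avoiding[OF B(1) y(1)] by (auto simp: avoiding_def)
    show "u Y (nbr y B) * (u X B * u X B') * u Y' (nbr y' B') = 0"
    proof (cases "B = B'")
      case True
      have "u Y (nbr y B) * (u X B * u X B) * u Y' (nbr y' B) =
          u X B * (u Y (nbr y B) * u Y' (nbr y' B))"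
        using X V u_idem adjacent_entries_commute[OF X(1,2,4) V(1,3)]
        by (simp flip: mult.assoc)
      thus ?thesis using True B zero by simp
    qed (use X V u_row_orth in simp)
  qed
  finally show ?thesis .
qed

lemma edge_proj_orth:
  assumes "X \<in> verts" "Y \<in> verts" "Y' \<in> verts" "X \<inter> Y = {}" "X \<inter> Y' = {}"
    and "Y \<noteq> Y'" "y \<in> points"
  shows "edge_proj X Y y * edge_proj X Y' y = 0"
  using assms nbr_in_avoiding by (intro edge_proj_mult_eq_zero) (auto intro: u_col_orth simp: avoiding_def)

lemma u_mult_sum_nbrs:
  assumes "X \<in> verts" "B \<in> verts" "D \<in> verts"
  shows "u X B * (\<Sum>Y\<in>nbrs X. u Y D) = (if B \<inter> D = {} then u X B else 0)"
proof (cases "B \<inter> D = {}")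
  case True
  have "u X B * (\<Sum>Y\<in>nbrs X. u Y D) = (\<Sum>Y\<in>verts. u X B * u Y D)"
    unfolding sum_distrib_left using assms True
    by (intro sum.mono_neutral_left) (auto simp: nbrs_def intro: u_mult_eq_zero)
  thus ?thesis using True assms by (simp add: col_sum flip: sum_distrib_left)
next
  case False
  have "(\<Sum>Y\<in>nbrs X. u X B * u Y D) = 0"
    using assms False by (intro sum.neutral ballI) (auto simp: nbrs_def intro: u_mult_eq_zero)
  thus ?thesis using False by (simp add: sum_distrib_left)
qed

lemma u_mult_sum_nbrs_point_proj:
  assumes "X \<in> verts" "B \<in> avoiding y" "y \<in> points"
  shows "u X B * (\<Sum>Y\<in>nbrs X. point_proj Y y) = of_nat (k - 1) * u X B"
proof -
  have B: "B \<in> verts" "y \<notin> B" using assms(2) by (auto simp: avoiding_def)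
  have "u X B * (\<Sum>Y\<in>nbrs X. point_proj Y y) =
      (\<Sum>D\<in>{D \<in> verts. y \<in> D}. u X B * (\<Sum>Y\<in>nbrs X. u Y D))"
    unfolding point_proj_def by (simp add: sum.swap[of _ "nbrs X"] sum_distrib_left)
  also have "\<dots> = (\<Sum>D\<in>{D \<in> verts. y \<in> D}. if B \<inter> D = {} then u X B else 0)"
    using assms(1) B by (intro sum.cong refl) (simp add: u_mult_sum_nbrs)
  also have "\<dots> = of_nat (card {D \<in> nbrs B. y \<in> D}) * u X B"
    by (simp add: sum.If_cases nbrs_def Int_def conj_commute)
  finally show ?thesis using card_nbrs_containing[OF B(1) assms(3) B(2)] by simp
qed

lemma point_proj_add_sum_edge_proj:
  assumes "X \<in> verts" "y \<in> points"
  shows "point_proj X y + (\<Sum>Y\<in>nbrs X. edge_proj X Y y) = 1"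
proof -
  have "(1 - point_proj X y) * (\<Sum>Y\<in>nbrs X. point_proj Y y) =
      (\<Sum>B\<in>avoiding y. u X B * (\<Sum>Y\<in>nbrs X. point_proj Y y))"
    using assms by (simp add: one_minus_point_proj sum_distrib_right)
  also have "\<dots> = (\<Sum>B\<in>avoiding y. of_nat (k - 1) * u X B)"
    using assms by (intro sum.cong refl u_mult_sum_nbrs_point_proj)
  also have "\<dots> = of_nat (k - 1) * (1 - point_proj X y)"
    using assms by (simp add: one_minus_point_proj sum_distrib_left)
  finally have "(\<Sum>Y\<in>nbrs X. edge_proj X Y y) = (of_nat k - of_nat (k - 1)) * (1 - point_proj X y)"
    using assms(1) by (simp add: edge_proj_def sum_subtractf card_nbrs right_diff_distrib
        left_diff_distrib mult_of_nat_commute flip: sum_distrib_left)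
  also have "(of_nat k - of_nat (k - 1) :: 'a) = 1"
    using two_le_k by (simp add: of_nat_diff)
  finally show ?thesis by simp
qed

lemma point_proj_nbr_eq_sum:
  assumes "X \<in> verts" "Y \<in> nbrs X" "y \<in> points"
  shows "point_proj Y y = (\<Sum>Y'\<in>nbrs X - {Y}. edge_proj X Y' y)"
proof -
  have "Y \<in> verts" "X \<inter> Y = {}" using assms(2) by (auto simp: nbrs_def)
  hence "point_proj X y + ((1 - point_proj X y - point_proj Y y) +
      (\<Sum>Y'\<in>nbrs X - {Y}. edge_proj X Y' y)) = 1"
    using point_proj_add_sum_edge_proj[OF assms(1,3)] assms
    by (simp add: sum.remove edge_proj_eq)
  thus ?thesis by (simp add: algebra_simps)
qed

lemma point_proj_mult_edge_proj:
  assumes "P \<in> verts" "X \<in> nbrs P" "Y \<in> nbrs P" "Y \<noteq> X" "y \<in> points"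
  shows "point_proj X y * edge_proj P Y y = edge_proj P Y y"
proof -
  have Y: "Y \<in> verts" "P \<inter> Y = {}" using assms(3) by (auto simp: nbrs_def)
  have "point_proj X y * edge_proj P Y y = (\<Sum>Y'\<in>nbrs P - {X}. edge_proj P Y' y * edge_proj P Y y)"
    by (simp add: point_proj_nbr_eq_sum[OF assms(1,2,5)] sum_distrib_right)
  also have "\<dots> = edge_proj P Y y * edge_proj P Y y"
    using assms Y edge_proj_orth by (intro sum_eq_single) (auto simp: nbrs_def)
  finally show ?thesis using edge_proj_idem[OF assms(1) Y] by simp
qed

lemma edge_proj_mult_point_proj_exchange:
  assumes X: "X \<in> verts" and z: "z \<in> points" "z \<notin> X" and a: "a \<in> X"
    and c: "c \<in> points" "c \<notin> X" "c \<noteq> z" and y: "y \<in> points"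
  shows "edge_proj X (nbr z X) y * point_proj (insert c (X - {a})) y = 0"
proof -
  \<comment> \<open>nbr c X is a common neighbour of X and of the exchanged vertex X'.\<close>
  define X' where "X' = insert c (X - {a})"
  define C where "C = nbr z X"
  define P where "P = nbr c X"
  have V: "X' \<in> verts" "C \<in> verts" "P \<in> verts" "X \<inter> C = {}"
    using exchange_in_verts[OF X a c(1,2)] nbr_in_verts[OF X] z c by (auto simp: X'_def C_def P_def)
  have P: "X \<in> nbrs P" "X' \<in> nbrs P"
    using X V by (auto simp: nbrs_def P_def X'_def nbr_def)
  have "C \<noteq> P" using inj_on_nbr_label[of X] z c by (auto simp: C_def P_def dest: inj_onD)
  have "edge_proj X C y * edge_proj P Y' y = 0" if Y': "Y' \<in> nbrs P - {X'}" for Y'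
  proof (cases "Y' = X")
    case True
    thus ?thesis
      using edge_proj_sym[of P X] edge_proj_orth[of X C P] P V X y \<open>C \<noteq> P\<close>
      by (auto simp: nbrs_def Int_commute)
  next
    case False
    have "edge_proj X C y * edge_proj P Y' y = edge_proj X C y * point_proj X y * edge_proj P Y' y"
      using point_proj_mult_edge_proj[OF V(3) P(1) _ False y] Y' by (simp add: mult.assoc)
    thus ?thesis using edge_proj_mult_point_proj[OF X V(2,4)] by simp
  qed
  hence "edge_proj X C y * point_proj X' y = 0"
    by (simp add: point_proj_nbr_eq_sum[OF V(3) P(2) y] sum_distrib_left)
  thus ?thesis by (simp add: C_def X'_def)
qed

lemma edge_proj_absorbs_exchange:
  assumes X: "X \<in> verts" and z: "z \<in> points" "z \<notin> X" and a: "a \<in> X"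
    and c: "c \<in> points" "c \<notin> X" "c \<noteq> z" and y: "y \<in> points"
  shows "edge_proj X (nbr z X) y * edge_proj (insert c (X - {a})) (nbr z (insert c (X - {a}))) y =
    edge_proj X (nbr z X) y"
proof -
  define X' where "X' = insert c (X - {a})"
  define C where "C = nbr z X"
  have V: "X' \<in> verts" "C \<in> verts" "z \<notin> X'" "z \<notin> C"
    using exchange_in_verts[OF X a c(1,2)] nbr_in_verts[OF X z] z c by (auto simp: X'_def C_def)
  have "edge_proj X C y * point_proj X' y = 0"
    using edge_proj_mult_point_proj_exchange[OF X z a c y] by (simp add: C_def X'_def)
  moreover have "edge_proj X C y * point_proj (nbr z X') y = 0"
  proof -
    have "a \<in> points" "a \<notin> C" "a \<noteq> z" "c \<in> C"
      using a c z vert_subset_points[OF X] by (auto simp: C_def nbr_def)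
    hence "edge_proj C (nbr z C) y * point_proj (insert a (C - {c})) y = 0"
      using edge_proj_mult_point_proj_exchange[OF V(2) z(1) V(4) _ _ _ _ y] by blast
    moreover have "nbr z C = X" "insert a (C - {c}) = nbr z X'"
      using nbr_nbr[OF X z(2)] nbr_exchange[OF X z(2) a c] by (simp_all add: C_def X'_def)
    ultimately show ?thesis using edge_proj_sym[OF V(2) X] by (simp add: C_def Int_commute)
  qed
  ultimately have "edge_proj X C y * edge_proj X' (nbr z X') y = edge_proj X C y"
    using V nbr_in_verts[OF V(1) z(1) V(3)]
    by (simp add: edge_proj_eq right_diff_distrib)
  thus ?thesis by (simp add: C_def X'_def)
qed

lemma edge_proj_exchange:
  assumes X: "X \<in> verts" and z: "z \<in> points" "z \<notin> X" and a: "a \<in> X"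
    and c: "c \<in> points" "c \<notin> X" "c \<noteq> z" and y: "y \<in> points"
  shows "edge_proj X (nbr z X) y = edge_proj (insert c (X - {a})) (nbr z (insert c (X - {a}))) y"
proof -
  define X' where "X' = insert c (X - {a})"
  have X': "X' \<in> verts" "z \<notin> X'" "c \<in> X'" "a \<in> points" "a \<notin> X'" "a \<noteq> z"
    using exchange_in_verts[OF X a c(1,2)] a c z vert_subset_points[OF X] by (auto simp: X'_def)
  have "insert a (X' - {c}) = X" using a c by (auto simp: X'_def)
  hence le: "edge_proj X' (nbr z X') y * edge_proj X (nbr z X) y = edge_proj X' (nbr z X') y"
    using edge_proj_absorbs_exchange[OF X'(1) z(1) X'(2,3) X'(4-6) y] by simp
  have "edge_proj X (nbr z X) y = star (edge_proj X (nbr z X) y * edge_proj X' (nbr z X') y)"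
    using edge_proj_absorbs_exchange[OF X z a c y] edge_proj_selfadjoint[OF X nbr_in_verts[OF X z]]
    by (simp add: X'_def)
  also have "\<dots> = edge_proj X' (nbr z X') y * edge_proj X (nbr z X) y"
    using edge_proj_selfadjoint X nbr_in_verts X' z by (simp add: star_mult)
  finally show ?thesis using le by (simp add: X'_def)
qed

lemma edge_proj_eq_if_same_label:
  assumes z: "z \<in> points" and X: "X \<in> verts" "z \<notin> X" and X0: "X0 \<in> verts" "z \<notin> X0"
    and y: "y \<in> points"
  shows "edge_proj X (nbr z X) y = edge_proj X0 (nbr z X0) y"
  using X
proof (induction "card (X - X0)" arbitrary: X)
  case 0
  hence "X = X0" using X0 finite_vert vert_eq_if_subset by auto
  thus ?case by simp
next
  case (Suc n)
  obtain a where a: "a \<in> X" "a \<notin> X0" using Suc.hyps(2) by (metis Diff_iff card.empty ex_in_conv nat.simps(3))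
  obtain c where c: "c \<in> X0" "c \<notin> X" using a X0 Suc.prems vert_eq_if_subset by blast
  have c': "c \<in> points" "c \<noteq> z" using c X0 vert_subset_points by auto
  define X' where "X' = insert c (X - {a})"
  have "X' \<in> verts" "z \<notin> X'" using exchange_in_verts[OF Suc.prems(1) a(1) c'(1) c(2)] Suc.prems c'
    by (auto simp: X'_def)
  moreover have "X' - X0 = (X - X0) - {a}" using c by (auto simp: X'_def)
  hence "card (X' - X0) = n"
    using Suc.hyps(2) a finite_vert[OF Suc.prems(1)] by (simp flip: Suc.hyps(2))
  ultimately have "edge_proj X' (nbr z X') y = edge_proj X0 (nbr z X0) y" using Suc.hyps(1) by simp
  thus ?case using edge_proj_exchange[OF Suc.prems(1) z Suc.prems(2) a(1) c'(1) c(2) c'(2) y]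
    by (simp add: X'_def)
qed

section \<open>The label matrix\<close>

definition label_proj :: "nat \<Rightarrow> nat \<Rightarrow> 'a" where
  "label_proj z y = (let X = SOME X. X \<in> avoiding z in edge_proj X (nbr z X) y)"

lemma label_proj_eq_edge_proj:
  assumes "z \<in> points"
  obtains X where "X \<in> verts" "z \<notin> X" "label_proj z y = edge_proj X (nbr z X) y"
proof -
  obtain X where "X \<in> verts" "X \<inter> {z} = {}"
    using exists_vert_disjoint[of "{z}"] assms two_le_k by auto
  hence "(SOME X. X \<in> avoiding z) \<in> avoiding z" by (intro someI) (auto simp: avoiding_def)
  thus ?thesis using that by (auto simp: label_proj_def avoiding_def Let_def)
qed

lemma edge_proj_eq_label_proj:
  assumes "z \<in> points" "X \<in> verts" "z \<notin> X" "y \<in> points"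
  shows "edge_proj X (nbr z X) y = label_proj z y"
  using label_proj_eq_edge_proj[OF assms(1)] edge_proj_eq_if_same_label[OF assms(1-3) _ _ assms(4)]
  by metis

lemma label_proj_selfadjoint: "z \<in> points \<Longrightarrow> star (label_proj z y) = label_proj z y"
  by (metis label_proj_eq_edge_proj edge_proj_selfadjoint nbr_in_verts disjoint_nbr(1))

lemma label_proj_idem: "z \<in> points \<Longrightarrow> label_proj z y * label_proj z y = label_proj z y"
  by (metis label_proj_eq_edge_proj edge_proj_idem nbr_in_verts disjoint_nbr(1))

lemma one_minus_point_proj_eq_sum_label_proj:
  assumes "A \<in> verts" "y \<in> points"
  shows "1 - point_proj A y = (\<Sum>x\<in>points - A. label_proj x y)"
proof -
  have "1 - point_proj A y = (\<Sum>Y\<in>nbrs A. edge_proj A Y y)"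
    using point_proj_add_sum_edge_proj[OF assms] by (simp add: algebra_simps)
  also have "\<dots> = (\<Sum>x\<in>points - A. label_proj x y)"
    using assms by (simp add: sum_nbrs edge_proj_eq_label_proj)
  finally show ?thesis .
qed

lemma point_proj_eq_sum_label_proj:
  assumes A: "A \<in> verts" and y: "y \<in> points"
  shows "point_proj A y = (\<Sum>x\<in>A. label_proj x y)"
proof -
  have "card (points - A) \<noteq> 0" using card_points_diff_vert[OF A] two_le_k by simp
  hence "points - A \<noteq> {}" by (rule contrapos_nn) simp
  then obtain z where z: "z \<in> points" "z \<notin> A" by blast
  define C where "C = nbr z A"
  have C: "C \<in> verts" "A \<inter> C = {}" "z \<notin> C" "nbr z C = A"
    using nbr_in_verts[OF A z] nbr_nbr[OF A z(2)] by (simp_all add: C_def)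
  have "points - C = insert z A" using z vert_subset_points[OF A] by (auto simp: C_def nbr_def)
  hence "1 - point_proj C y = label_proj z y + (\<Sum>x\<in>A. label_proj x y)"
    using one_minus_point_proj_eq_sum_label_proj[OF C(1) y] z(2) finite_vert[OF A] by simp
  moreover have "label_proj z y = 1 - point_proj C y - point_proj A y"
    using edge_proj_eq_label_proj[OF z(1) C(1,3) y] edge_proj_eq[OF C(1) A] C
    by (simp add: Int_commute)
  ultimately show ?thesis by (simp add: algebra_simps)
qed

lemma label_proj_col_sum:
  assumes "y \<in> points" shows "(\<Sum>x\<in>points. label_proj x y) = 1"
proof -
  obtain A where A: "A \<in> verts" using exists_vert_disjoint[of "{}"] by auto
  have "(\<Sum>x\<in>points. label_proj x y) = (\<Sum>x\<in>A. label_proj x y) + (\<Sum>x\<in>points - A. label_proj x y)"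
    using vert_subset_points[OF A] by (simp add: sum.subset_diff)
  thus ?thesis
    using point_proj_eq_sum_label_proj[OF A assms] one_minus_point_proj_eq_sum_label_proj[OF A assms]
    by (metis add.commute diff_add_cancel)
qed

lemma label_proj_col_orth:
  assumes "x \<in> points" "x' \<in> points" "x \<noteq> x'" "y \<in> points"
  shows "label_proj x y * label_proj x' y = 0"
proof -
  obtain X where X: "X \<in> verts" "X \<inter> {x, x'} = {}"
    using exists_vert_disjoint[of "{x, x'}"] assms two_le_k by auto
  have "nbr x X \<noteq> nbr x' X" using assms X by (auto simp: nbr_def)
  hence "edge_proj X (nbr x X) y * edge_proj X (nbr x' X) y = 0"
    using X assms by (intro edge_proj_orth nbr_in_verts) auto
  thus ?thesis using X assms by (simp add: edge_proj_eq_label_proj)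
qed

lemma label_proj_row_orth:
  assumes "z \<in> points" "y \<in> points" "y' \<in> points" "y \<noteq> y'"
  shows "label_proj z y * label_proj z y' = 0"
proof -
  obtain X where X: "X \<in> verts" "z \<notin> X" using exists_vert_disjoint[of "{z}"] assms two_le_k by auto
  define C where "C = nbr z X"
  have C: "C \<in> verts" "X \<inter> C = {}" using nbr_in_verts[OF X(1) assms(1) X(2)] by (simp_all add: C_def)
  have "u C (nbr y B) * u C (nbr y' B) = 0" if "B \<in> avoiding y" "B \<in> avoiding y'" for B
  proof -
    have "y' \<in> nbr y B" using that assms by (auto simp: avoiding_def nbr_def)
    thus ?thesis using that assms C nbr_in_avoiding by (intro u_row_orth) (auto simp: avoiding_def)
  qed
  hence "edge_proj X C y * edge_proj X C y' = 0"
    using X C assms by (intro edge_proj_mult_eq_zero) auto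
  thus ?thesis using X assms by (simp add: C_def edge_proj_eq_label_proj)
qed

lemma label_proj_mult_col:
  assumes "a \<in> points" "x \<in> points" "y \<in> points"
  shows "label_proj a y * label_proj x y = (if x = a then label_proj a y else 0)"
  using assms label_proj_idem label_proj_col_orth by auto

lemma label_proj_mult_point_proj:
  assumes "a \<in> points" "A \<in> verts" "y \<in> points"
  shows "label_proj a y * point_proj A y = (if a \<in> A then label_proj a y else 0)"
  using assms vert_subset_points[OF assms(2)] finite_vert[OF assms(2)]
  by (simp add: point_proj_eq_sum_label_proj sum_distrib_left label_proj_mult_col subset_iff
      cong: sum.cong)

lemma point_proj_mult_label_proj:
  assumes "a \<in> points" "A \<in> verts" "y \<in> points"
  shows "point_proj A y * label_proj a y = (if a \<in> A then label_proj a y else 0)"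
  using assms vert_subset_points[OF assms(2)] finite_vert[OF assms(2)]
  by (simp add: point_proj_eq_sum_label_proj sum_distrib_right label_proj_mult_col subset_iff
      cong: sum.cong)

lemma label_proj_sandwich_eq_zero:
  assumes A: "A \<in> verts" "a \<in> A" "q \<in> points" "q \<notin> A" and y: "y \<in> points"
  shows "label_proj a y * (1 - point_proj A y') * label_proj q y = 0"
proof -
  have a: "a \<in> points" using A vert_subset_points by auto
  have "label_proj a y * (1 - point_proj A y') * label_proj q y =
      label_proj a y * point_proj A y * (1 - point_proj A y') * label_proj q y"
    using label_proj_mult_point_proj[OF a A(1) y] A(2) by simp
  also have "\<dots> = label_proj a y * (1 - point_proj A y') * (point_proj A y * label_proj q y)"
    using point_proj_commute[OF A(1), of y y'] by (simp add: algebra_simps)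
  also have "\<dots> = 0" using point_proj_mult_label_proj[OF A(3,1) y] A(4) by simp
  finally show ?thesis .
qed

lemma label_proj_subset_sum_eq_zero:
  assumes a: "a \<in> points" "q \<in> points" "a \<noteq> q" and y: "y \<in> points" "y' \<in> points" "y \<noteq> y'"
    and S: "S \<subseteq> points - {a, q}" "card S = k - 1"
  shows "(\<Sum>c\<in>S. label_proj a y * label_proj c y' * label_proj q y) = 0"
proof -
  define A where "A = points - {q} - S"
  have "finite S" using S(1) by (rule finite_subset) simp
  have "S \<subseteq> points - {q}" using S(1) by auto
  with \<open>finite S\<close> have "card A = card (points - {q}) - card S"
    unfolding A_def by (rule card_Diff_subset)
  hence "card A = k - 1" using a S(2) card_points two_le_k by simp
  hence A_vert: "A \<in> verts" by (auto simp: in_verts_iff A_def)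
  have "points - A = insert q S" using S(1) a by (auto simp: A_def)
  moreover have "label_proj a y * (1 - point_proj A y') * label_proj q y = 0"
    using label_proj_sandwich_eq_zero[OF A_vert _ a(2) _ y(1)] a S(1) by (auto simp: A_def)
  ultimately have "0 = label_proj a y * (\<Sum>c\<in>insert q S. label_proj c y') * label_proj q y"
    by (simp add: one_minus_point_proj_eq_sum_label_proj[OF A_vert y(2)])
  also have "(\<Sum>c\<in>insert q S. label_proj c y') = label_proj q y' + (\<Sum>c\<in>S. label_proj c y')"
    using S(1) \<open>finite S\<close> by (subst sum.insert) auto
  also have "label_proj a y * \<dots> * label_proj q y = label_proj a y * (label_proj q y' * label_proj q y) +
      (\<Sum>c\<in>S. label_proj a y * label_proj c y' * label_proj q y)"
    by (simp add: distrib_left distrib_right sum_distrib_left sum_distrib_right mult.assoc)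
  finally show ?thesis using label_proj_row_orth[OF a(2) y(2,1)] y(3) by simp
qed

lemma label_proj_triple_eq_zero:
  assumes a: "a \<in> points" "c \<in> points" "q \<in> points" "a \<noteq> c" "a \<noteq> q" "c \<noteq> q"
    and y: "y \<in> points" "y' \<in> points" "y \<noteq> y'"
  shows "label_proj a y * label_proj c y' * label_proj q y = 0"
proof -
  define T where "T = points - {a, q}"
  define f where "f c' = label_proj a y * label_proj c' y' * label_proj q y" for c'
  have T: "finite T" "c \<in> T" "card T = 2 * k - 3"
    using a card_points by (auto simp: T_def card_Diff_subset)
  have sums: "sum f S = 0" if "S \<subseteq> T" "card S = k - 1" for S
    using label_proj_subset_sum_eq_zero[OF a(1,3,5) y] that by (simp add: f_def T_def)
  consider "k - 1 < card T" | "T = {c}"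
  proof (cases "k = 2")
    case True
    hence "card T = 1" using T by simp
    thus ?thesis using that T(2) by (auto simp: card_Suc_eq)
  qed (use T two_le_k in simp)
  thus ?thesis
  proof cases
    case 1
    hence "of_nat (k - 1) * f c = 0"
      using T sums by (intro of_nat_mult_eq_zero_if_subset_sums_eq_zero)
    hence "f c = 0" by (rule of_nat_mult_eq_zero) (use two_le_k in simp)
    thus ?thesis by (simp add: f_def)
  next
    case 2
    hence "card T = 1" by simp
    hence "k = 2" using T(3) two_le_k by arith
    hence "card {c} = k - 1" by simp
    thus ?thesis using sums[of "{c}"] 2 by (simp add: f_def)
  qed
qed

lemma label_proj_commute:
  assumes "x \<in> points" "x' \<in> points" "y \<in> points" "y' \<in> points"
  shows "label_proj x y * label_proj x' y' = label_proj x' y' * label_proj x y"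
proof -
  consider "x = x'" "y = y'" | "x = x'" "y \<noteq> y'" | "x \<noteq> x'" "y = y'" | "x \<noteq> x'" "y \<noteq> y'"
    by blast
  thus ?thesis
  proof cases
    case 2
    thus ?thesis using assms label_proj_row_orth by simp
  next
    case 3
    thus ?thesis using assms label_proj_col_orth by simp
  next
    case 4
    have "label_proj x y * label_proj x' y' = (\<Sum>q\<in>points. label_proj x y * label_proj x' y' * label_proj q y)"
      using label_proj_col_sum[OF assms(3)] by (simp flip: sum_distrib_left)
    also have "\<dots> = label_proj x y * label_proj x' y' * label_proj x y"
    proof (intro sum_eq_single)
      fix q assume q: "q \<in> points" "q \<noteq> x"
      show "label_proj x y * label_proj x' y' * label_proj q y = 0"
      proof (cases "q = x'")
        case True
        thus ?thesis using label_proj_row_orth[OF assms(2,4,3)] 4 by (simp add: mult.assoc)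
      qed (use assms q 4 label_proj_triple_eq_zero in auto)
    qed (use assms in auto)
    finally show ?thesis
      using assms label_proj_selfadjoint by (intro selfadjoint_commute_if_absorb) auto
  qed simp
qed

lemma point_proj_commute_point_proj:
  assumes "A \<in> verts" "B \<in> verts" "y \<in> points" "y' \<in> points"
  shows "point_proj A y * point_proj B y' = point_proj B y' * point_proj A y"
proof -
  have "point_proj A y * point_proj B y' = (\<Sum>x\<in>A. \<Sum>x'\<in>B. label_proj x y * label_proj x' y')"
    using assms by (simp add: point_proj_eq_sum_label_proj sum_product)
  also have "\<dots> = (\<Sum>x\<in>A. \<Sum>x'\<in>B. label_proj x' y' * label_proj x y)"
    using assms vert_subset_points by (intro sum.cong refl label_proj_commute) auto
  also have "\<dots> = point_proj B y' * point_proj A y"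
    using assms by (simp add: point_proj_eq_sum_label_proj sum_product sum.swap[of _ B])
  finally show ?thesis .
qed

definition superset_proj :: "nat set \<Rightarrow> nat set \<Rightarrow> 'a" where
  "superset_proj A S = (\<Sum>B\<in>{B \<in> verts. S \<subseteq> B}. u A B)"

lemma superset_proj_empty: "A \<in> verts \<Longrightarrow> superset_proj A {} = 1"
  by (simp add: superset_proj_def row_sum)

lemma superset_proj_insert:
  assumes "A \<in> verts"
  shows "superset_proj A (insert y S) = superset_proj A S * point_proj A y"
proof -
  have "superset_proj A S * point_proj A y =
      (\<Sum>B\<in>{B \<in> verts. S \<subseteq> B} \<inter> {B \<in> verts. y \<in> B}. u A B)"
    unfolding superset_proj_def point_proj_def by (rule row_subsum_mult[OF assms]) auto
  also have "{B \<in> verts. S \<subseteq> B} \<inter> {B \<in> verts. y \<in> B} = {B \<in> verts. insert y S \<subseteq> B}" by auto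
  finally show ?thesis by (simp add: superset_proj_def)
qed

lemma superset_proj_vert: "A \<in> verts \<Longrightarrow> B \<in> verts \<Longrightarrow> superset_proj A B = u A B"
proof -
  assume "A \<in> verts" "B \<in> verts"
  hence "{B' \<in> verts. B \<subseteq> B'} = {B}" using vert_eq_if_subset by auto
  thus ?thesis by (simp add: superset_proj_def)
qed

lemma commute_superset_proj:
  assumes "A \<in> verts" "finite S" "\<And>y. y \<in> S \<Longrightarrow> c * point_proj A y = point_proj A y * c"
  shows "c * superset_proj A S = superset_proj A S * c"
  using assms(2,3)
proof (induction S rule: finite_induct)
  case empty
  thus ?case by (simp add: superset_proj_empty[OF assms(1)])
next
  case (insert y S)
  hence "c * superset_proj A S * point_proj A y = superset_proj A S * point_proj A y * c"
    by (simp add: mult.assoc)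
  thus ?case by (simp add: superset_proj_insert[OF assms(1)] mult.assoc)
qed

lemma u_commute:
  assumes "i \<in> verts" "j \<in> verts" "p \<in> verts" "q \<in> verts"
  shows "u i j * u p q = u p q * u i j"
proof -
  have "point_proj p y * superset_proj i j = superset_proj i j * point_proj p y" if "y \<in> points" for y
    using point_proj_commute_point_proj[OF assms(3,1) that] vert_subset_points[OF assms(2)]
    by (intro commute_superset_proj[OF assms(1) finite_vert[OF assms(2)]]) auto
  hence "u i j * point_proj p y = point_proj p y * u i j" if "y \<in> points" for y
    using that superset_proj_vert[OF assms(1,2)] by simp
  hence "u i j * superset_proj p q = superset_proj p q * u i j"
    using assms vert_subset_points by (intro commute_superset_proj[OF assms(3) finite_vert]) auto
  thus ?thesis using superset_proj_vert[OF assms(3,4)] by simp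
qed

end

theorem theorem1p1:
  fixes k :: nat
    and smult :: "complex \<Rightarrow> 'a::ring_1 \<Rightarrow> 'a"
    and star :: "'a \<Rightarrow> 'a"
    and nrm :: "'a \<Rightarrow> real"
    and u :: "nat set \<Rightarrow> nat set \<Rightarrow> 'a"
  assumes "k \<ge> 2"
    and "cstar_algebra smult star nrm"
    and "graph_magic_unitary star (odd_graph_vertices k) odd_graph_adj u"
  shows "\<forall>i\<in>odd_graph_vertices k. \<forall>j\<in>odd_graph_vertices k.
         \<forall>p\<in>odd_graph_vertices k. \<forall>q\<in>odd_graph_vertices k.
           u i j * u p q = u p q * u i j"
proof -
  interpret odd_graph_magic_unitary smult star nrm k u
    using assms by (simp add: odd_graph_magic_unitary_def odd_graph_def odd_graph_magic_unitary_axioms_def)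
  show ?thesis using u_commute by blast
qed

end
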